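(* Let $P$ be a finite poset. The map $\overline{\Lambda}:\mathrm{Hom}(P,\mathbb{N})\to\{\text{monomials of }k[x_P]\}$, $\phi\mapsto\overline{\Lambda}\phi$, is a bijection.
   Context: $\mathbb{N}=\{0,1,\dots\}$; $\mathrm{Hom}(P,\mathbb{N})$ is the set of isotone maps $P\to\mathbb{N}$. The ascent of $\phi$ is $\Lambda\phi=\{(p,i)\in P\times\mathbb{N}:\phi(q)\le i<\phi(p)\ \forall q<p\}$, and $\overline{\Lambda}\phi=\prod_{(p,i)\in\Lambda\phi}x_p$ in the polynomial ring $k[x_P]$ over a field $k$ (monomials of $k[x_P]$ are identified with elements $\sum_p n_pp$ of the free commutative monoid $\mathbb{N}P$). *)

theory Defs
  imports Main "HOL-Library.FuncSet" "HOL-Library.Multiset"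
begin

text \<open>Monomials of k[x_P] are identified with the free commutative monoid NP,
i.e. with finite multisets over P.\<close>

definition hom_nat :: "'a::order set \<Rightarrow> ('a \<Rightarrow> nat) set" where
  "hom_nat P = {\<phi>. \<phi> \<in> extensional P \<and> monotone_on P (\<le>) (\<le>) \<phi>}"

definition ascent :: "'a::order set \<Rightarrow> ('a \<Rightarrow> nat) \<Rightarrow> ('a \<times> nat) set" where
  "ascent P \<phi> = {(p, i). p \<in> P \<and> (\<forall>q\<in>P. q < p \<longrightarrow> \<phi> q \<le> i) \<and> i < \<phi> p}"

definition ascent_monomial :: "'a::order set \<Rightarrow> ('a \<Rightarrow> nat) \<Rightarrow> 'a multiset" where
  "ascent_monomial P \<phi> = image_mset fst (mset_set (ascent P \<phi>))"

definition monomials :: "'a set \<Rightarrow> 'a multiset set" where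
  "monomials P = {M. set_mset M \<subseteq> P}"

end

theory Submission
  imports Defs
begin

text \<open>For an isotone \<open>\<phi>\<close>, the exponent of \<open>x\<^sub>p\<close> in \<open>\<Lambda>\<phi>\<close> is \<open>\<phi> p\<close> minus the largest value
  of \<open>\<phi>\<close> strictly below \<open>p\<close> (or minus 0 if \<open>p\<close> is minimal). Hence \<open>\<phi>\<close> is recovered from its
  monomial \<open>M\<close> by the recursion \<open>\<phi> p = M(p) + max {\<phi> q | q < p}\<close> along the well-founded
  strict order of the finite poset, and this recursion, started from an arbitrary monomial,
  always produces an isotone map with that monomial.\<close>

definition max_below :: "'a::order set \<Rightarrow> ('a \<Rightarrow> nat) \<Rightarrow> 'a \<Rightarrow> nat" where
  "max_below P \<phi> p = Max (insert 0 (\<phi> ` {q\<in>P. q < p}))"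

definition less_on :: "'a::order set \<Rightarrow> ('a \<times> 'a) set" where
  "less_on P = {(q, p). q \<in> P \<and> p \<in> P \<and> q < p}"

lemma max_below_le_iff:
  "finite P \<Longrightarrow> max_below P \<phi> p \<le> i \<longleftrightarrow> (\<forall>q\<in>P. q < p \<longrightarrow> \<phi> q \<le> i)"
  unfolding max_below_def by (subst Max_le_iff) auto

lemma max_below_ge: "finite P \<Longrightarrow> q \<in> P \<Longrightarrow> q < p \<Longrightarrow> \<phi> q \<le> max_below P \<phi> p"
  using max_below_le_iff by blast

lemma max_below_cong:
  assumes "\<And>q. q \<in> P \<Longrightarrow> q < p \<Longrightarrow> \<phi> q = \<psi> q"
  shows "max_below P \<phi> p = max_below P \<psi> p"
proof -
  have "\<phi> ` {q\<in>P. q < p} = \<psi> ` {q\<in>P. q < p}"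
    using assms by (intro image_cong) auto
  then show ?thesis unfolding max_below_def by simp
qed

lemma wf_less_on: "finite P \<Longrightarrow> wf (less_on P)"
proof (rule finite_acyclic_wf)
  assume "finite P"
  moreover have "less_on P \<subseteq> P \<times> P" unfolding less_on_def by auto
  ultimately show "finite (less_on P)" by (meson finite_SigmaI finite_subset)
  have "trans (less_on P)" unfolding less_on_def trans_def by (auto dest: less_trans)
  moreover have "irrefl (less_on P)" unfolding less_on_def irrefl_def by auto
  ultimately show "acyclic (less_on P)" by (simp add: acyclic_irrefl)
qed

lemma finite_ascent: "finite P \<Longrightarrow> finite (ascent P \<phi>)"
  by (rule finite_subset[of _ "Sigma P (\<lambda>p. {..<\<phi> p})"]) (auto simp: ascent_def)

lemma count_ascent_monomial:
  assumes "finite P"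
  shows "count (ascent_monomial P \<phi>) p = (if p \<in> P then \<phi> p - max_below P \<phi> p else 0)"
proof -
  have fin: "finite (ascent P \<phi>)" using assms by (rule finite_ascent)
  have "count (ascent_monomial P \<phi>) p = card (fst -` {p} \<inter> ascent P \<phi>)"
    unfolding ascent_monomial_def count_image_mset using fin by (simp add: count_mset_set)
  also have "fst -` {p} \<inter> ascent P \<phi> = (if p \<in> P then {p} \<times> {max_below P \<phi> p..<\<phi> p} else {})"
    unfolding ascent_def using max_below_le_iff[OF assms] by auto
  finally show ?thesis by simp
qed

lemma ascent_monomial_in_monomials: "finite P \<Longrightarrow> ascent_monomial P \<phi> \<in> monomials P"
  unfolding monomials_def
  by (auto simp: count_ascent_monomial simp flip: count_greater_zero_iff split: if_splits)

lemma hom_nat_eq_count_plus_max_below: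
  assumes "finite P" and "\<phi> \<in> hom_nat P" and "p \<in> P"
  shows "\<phi> p = count (ascent_monomial P \<phi>) p + max_below P \<phi> p"
proof -
  have "\<phi> q \<le> \<phi> p" if "q \<in> P" "q < p" for q
    using assms(2,3) that unfolding hom_nat_def by (auto dest: monotone_onD)
  then have "max_below P \<phi> p \<le> \<phi> p" using max_below_le_iff[OF assms(1)] by blast
  then show ?thesis using count_ascent_monomial[OF assms(1)] assms(3) by simp
qed

lemma inj_on_ascent_monomial: "finite P \<Longrightarrow> inj_on (ascent_monomial P) (hom_nat P)"
proof (rule inj_onI, rule ext)
  fix \<phi> \<psi> p
  assume fin: "finite P" and \<phi>: "\<phi> \<in> hom_nat P" and \<psi>: "\<psi> \<in> hom_nat P"
    and eq: "ascent_monomial P \<phi> = ascent_monomial P \<psi>"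
  show "\<phi> p = \<psi> p"
  proof (induction p rule: wf_induct_rule[OF wf_less_on[OF fin]])
    case (1 p)
    show ?case
    proof (cases "p \<in> P")
      case True
      have "max_below P \<phi> p = max_below P \<psi> p"
        using 1 True by (intro max_below_cong) (simp add: less_on_def)
      then show ?thesis
        using hom_nat_eq_count_plus_max_below[OF fin \<phi> True]
          hom_nat_eq_count_plus_max_below[OF fin \<psi> True] eq by simp
    next
      case False
      then show ?thesis using \<phi> \<psi> unfolding hom_nat_def extensional_def by auto
    qed
  qed
qed

definition hom_of_monomial :: "'a::order set \<Rightarrow> 'a multiset \<Rightarrow> 'a \<Rightarrow> nat" where
  "hom_of_monomial P M =
     wfrec (less_on P) (\<lambda>\<phi> p. if p \<in> P then count M p + max_below P \<phi> p else undefined)"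

lemma hom_of_monomial_eq:
  assumes "finite P"
  shows "hom_of_monomial P M p =
    (if p \<in> P then count M p + max_below P (hom_of_monomial P M) p else undefined)"
proof -
  define F where "F = (\<lambda>\<phi> p. if p \<in> P then count M p + max_below P \<phi> p else undefined)"
  have "adm_wf (less_on P) F"
    unfolding adm_wf_def F_def by (auto intro!: max_below_cong simp: less_on_def)
  then have "hom_of_monomial P M = F (hom_of_monomial P M)"
    unfolding hom_of_monomial_def F_def[symmetric] by (rule wfrec_fixpoint[OF wf_less_on[OF assms]])
  then show ?thesis unfolding F_def by (rule fun_cong)
qed

lemma hom_of_monomial_in_hom_nat:
  assumes "finite P"
  shows "hom_of_monomial P M \<in> hom_nat P"
proof -
  let ?\<phi> = "hom_of_monomial P M"
  have less: "?\<phi> q \<le> ?\<phi> p" if "q \<in> P" "p \<in> P" "q < p" for p q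
    using hom_of_monomial_eq[OF assms, of M p] max_below_ge[OF assms, of q p ?\<phi>] that
    by simp
  have "monotone_on P (\<le>) (\<le>) ?\<phi>"
    by (rule monotone_onI) (metis less order.order_iff_strict order_refl)
  moreover have "?\<phi> \<in> extensional P"
    unfolding extensional_def using hom_of_monomial_eq[OF assms] by auto
  ultimately show ?thesis unfolding hom_nat_def by blast
qed

lemma ascent_monomial_hom_of_monomial:
  assumes "finite P" and "M \<in> monomials P"
  shows "ascent_monomial P (hom_of_monomial P M) = M"
proof (rule multiset_eqI)
  fix p
  show "count (ascent_monomial P (hom_of_monomial P M)) p = count M p"
  proof (cases "p \<in> P")
    case True
    then show ?thesis
      using hom_nat_eq_count_plus_max_below[OF assms(1) hom_of_monomial_in_hom_nat[OF assms(1)]]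
        hom_of_monomial_eq[OF assms(1), of M p] by simp
  next
    case False
    then show ?thesis
      using assms count_ascent_monomial[OF assms(1)]
      by (auto simp: monomials_def count_eq_zero_iff)
  qed
qed

theorem proposition3p3:
  fixes P :: "'a::order set"
  assumes "finite P"
  shows "bij_betw (ascent_monomial P) (hom_nat P) (monomials P)"
proof (rule bij_betw_imageI)
  show "inj_on (ascent_monomial P) (hom_nat P)"
    using assms by (rule inj_on_ascent_monomial)
  show "ascent_monomial P ` hom_nat P = monomials P"
  proof
    show "ascent_monomial P ` hom_nat P \<subseteq> monomials P"
      using ascent_monomial_in_monomials[OF assms] by blast
    show "monomials P \<subseteq> ascent_monomial P ` hom_nat P"
      using ascent_monomial_hom_of_monomial[OF assms] hom_of_monomial_in_hom_nat[OF assms]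
      by (metis image_eqI subsetI)
  qed
qed

end
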